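(* Let $P$ be a well-ordered phaser and suppose $P\to Q$. Then $Q$ is well-ordered.
   Context: A view is a record $v=(\mathrm{sp}(v),\mathrm{wp}(v),\mathrm{mode}(v))$ with $\mathrm{sp}(v),\mathrm{wp}(v)\in\mathbb{N}$ and $\mathrm{mode}(v)\in\{\mathtt{SW},\mathtt{SO},\mathtt{WO}\}$. For a view or mode, $\mathrm{CanSignal}$ means the mode is $\mathtt{SW}$ or $\mathtt{SO}$, and $\mathrm{CanWait}$ means the mode is $\mathtt{SW}$ or $\mathtt{WO}$. A phaser (state) $P$ is a finite partial map from task identifiers to views; $t\in P$ means $t\in\mathrm{dom}\,P$. For views, $v_1\unrhd v_2$ (cannot-happen-before) iff $\mathrm{mode}(v_1)=\mathtt{WO}$ or $\mathrm{sp}(v_1)\ge\mathrm{wp}(v_2)$ or $\mathrm{mode}(v_2)=\mathtt{SO}$. For phasers, $P\unrhd Q$ iff $P(t)\unrhd Q(t')$ for all $t\in\mathrm{dom}\,P$, $t'\in\mathrm{dom}\,Q$. $P$ is well-ordered iff $P\unrhd P$. Reduction $P\to_t^{o}Q$ (task $t$ performs operation $o$) is defined by four rules. Signal: if $P(t)=v$, $\mathrm{CanSignal}(v)$, and ($\mathrm{mode}(v)=\mathtt{SW}\Rightarrow\mathrm{wp}(v)=\mathrm{sp}(v)$), then $Q=P[t\mapsto v']$ where $v'$ is $v$ with $\mathrm{sp}$ increased by 1. Wait: if $P(t)=v$, $\mathrm{CanWait}(v)$, ($\mathrm{mode}(v)=\mathtt{SW}\Rightarrow\mathrm{wp}(v)+1=\mathrm{sp}(v)$),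 and $\mathrm{Sync}(P,t)$, meaning that for every $t'\in\mathrm{dom}\,P$ with $\mathrm{CanSignal}(P(t'))$ we have $\mathrm{sp}(P(t'))>\mathrm{wp}(v)$, then $Q=P[t\mapsto v']$ where $v'$ is $v$ with $\mathrm{wp}$ increased by 1. Register$(t',r)$ with $r$ a mode: if $t'\notin\mathrm{dom}\,P$, $P(t)=v$, ($\mathrm{CanWait}(r)\Rightarrow\mathrm{CanWait}(v)$) and ($\mathrm{CanSignal}(r)\Rightarrow\mathrm{CanSignal}(v)$), then $Q=P[t'\mapsto(\mathrm{sp}(v),\mathrm{wp}(v),r)]$. Drop: if $t\in\mathrm{dom}\,P$, then $Q$ is $P$ with $t$ removed from its domain. $P\to Q$ means $P\to_t^{o}Q$ for some $t,o$. *)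

theory Defs
  imports Main
begin

datatype mode = SW | SO | WO

record view =
  sp :: nat
  wp :: nat
  mode :: mode

definition CanSignalM :: "mode \<Rightarrow> bool" where
  "CanSignalM r \<longleftrightarrow> r = SW \<or> r = SO"
definition CanWaitM :: "mode \<Rightarrow> bool" where
  "CanWaitM r \<longleftrightarrow> r = SW \<or> r = WO"
definition CanSignal :: "view \<Rightarrow> bool" where
  "CanSignal v \<longleftrightarrow> CanSignalM (mode v)"
definition CanWait :: "view \<Rightarrow> bool" where
  "CanWait v \<longleftrightarrow> CanWaitM (mode v)"

type_synonym 't phaser = "'t \<rightharpoonup> view"

definition view_chb :: "view \<Rightarrow> view \<Rightarrow> bool" (infix "\<unrhd>\<^sub>v" 50) where
  "v1 \<unrhd>\<^sub>v v2 \<longleftrightarrow> mode v1 = WO \<or> sp v1 \<ge> wp v2 \<or> mode v2 = SO"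

definition phaser_chb :: "'t phaser \<Rightarrow> 't phaser \<Rightarrow> bool" where
  "phaser_chb P Q \<longleftrightarrow> (\<forall>t v t' v'. P t = Some v \<longrightarrow> Q t' = Some v' \<longrightarrow> v \<unrhd>\<^sub>v v')"

definition well_ordered :: "'t phaser \<Rightarrow> bool" where
  "well_ordered P \<longleftrightarrow> phaser_chb P P"

datatype 't op = Signal | Wait | Register 't mode | Drop

definition Sync :: "'t phaser \<Rightarrow> 't \<Rightarrow> bool" where
  "Sync P t \<longleftrightarrow> (\<forall>t' v' v. P t = Some v \<longrightarrow> P t' = Some v' \<longrightarrow> CanSignal v' \<longrightarrow> sp v' > wp v)"

inductive reduce :: "'t phaser \<Rightarrow> 't \<Rightarrow> 't op \<Rightarrow> 't phaser \<Rightarrow> bool" where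
  signal: "\<lbrakk> P t = Some v; CanSignal v; mode v = SW \<longrightarrow> wp v = sp v \<rbrakk>
     \<Longrightarrow> reduce P t Signal (P(t \<mapsto> v\<lparr>sp := Suc (sp v)\<rparr>))"
| wait: "\<lbrakk> P t = Some v; CanWait v; mode v = SW \<longrightarrow> wp v + 1 = sp v; Sync P t \<rbrakk>
     \<Longrightarrow> reduce P t Wait (P(t \<mapsto> v\<lparr>wp := Suc (wp v)\<rparr>))"
| register: "\<lbrakk> t' \<notin> dom P; P t = Some v; CanWaitM r \<longrightarrow> CanWait v; CanSignalM r \<longrightarrow> CanSignal v \<rbrakk>
     \<Longrightarrow> reduce P t (Register t' r) (P(t' \<mapsto> \<lparr>sp = sp v, wp = wp v, mode = r\<rparr>))"
| drop: "t \<in> dom P \<Longrightarrow> reduce P t Drop (P(t := None))"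

definition reduces :: "'t phaser \<Rightarrow> 't phaser \<Rightarrow> bool" where
  "reduces P Q \<longleftrightarrow> (\<exists>t o'. reduce P t o' Q)"

end

theory Submission
  imports Defs
begin

text \<open>Each reduction step changes at most one view, and only in a way that
cannot create a happens-before edge: a signal only raises its signal phase,
a registration copies phases while dropping capabilities, and a wait raises
the wait phase only when every signaller is already past it, which is
exactly what Sync demands.\<close>

lemma well_ordered_iff_ran:
  "well_ordered P \<longleftrightarrow> (\<forall>u\<in>ran P. \<forall>u'\<in>ran P. u \<unrhd>\<^sub>v u')"
  unfolding well_ordered_def phaser_chb_def ran_def by blast

lemma view_chbI:
  assumes "CanSignal u \<Longrightarrow> wp w \<le> sp u"
  shows "u \<unrhd>\<^sub>v w"
  using assms by (cases "mode u") (auto simp: view_chb_def CanSignal_def CanSignalM_def)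

lemma view_chb_mono_left:
  assumes "v \<unrhd>\<^sub>v u" and "sp v \<le> sp w" and "CanSignal w \<Longrightarrow> CanSignal v"
  shows "w \<unrhd>\<^sub>v u"
  using assms by (cases "mode v"; cases "mode w") (auto simp: view_chb_def CanSignal_def CanSignalM_def)

lemma view_chb_mono_right:
  assumes "u \<unrhd>\<^sub>v v" and "wp w \<le> wp v" and "CanWait w \<Longrightarrow> CanWait v"
  shows "u \<unrhd>\<^sub>v w"
  using assms by (cases "mode v"; cases "mode w") (auto simp: view_chb_def CanWait_def CanWaitM_def)

lemma well_ordered_map_le:
  assumes "well_ordered P" and "Q \<subseteq>\<^sub>m P"
  shows "well_ordered Q"
  using assms unfolding well_ordered_def phaser_chb_def map_le_def by (metis domI)

lemma well_ordered_fun_upd: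
  assumes "well_ordered P"
    and "\<And>u. u \<in> ran P \<Longrightarrow> w \<unrhd>\<^sub>v u \<and> u \<unrhd>\<^sub>v w"
    and "w \<unrhd>\<^sub>v w"
  shows "well_ordered (P(t \<mapsto> w))"
proof -
  have "ran (P(t \<mapsto> w)) \<subseteq> insert w (ran P)"
    by (auto simp: ran_def)
  then show ?thesis
    using assms unfolding well_ordered_iff_ran by blast
qed

lemma well_ordered_fun_upd_weaker:
  assumes "well_ordered P" and "v \<in> ran P"
    and "sp v \<le> sp w" and "CanSignal w \<Longrightarrow> CanSignal v"
    and "wp w \<le> wp v" and "CanWait w \<Longrightarrow> CanWait v"
  shows "well_ordered (P(t \<mapsto> w))"
proof (rule well_ordered_fun_upd[OF assms(1)])
  have chb: "\<And>u u'. u \<in> ran P \<Longrightarrow> u' \<in> ran P \<Longrightarrow> u \<unrhd>\<^sub>v u'"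
    using assms(1) unfolding well_ordered_iff_ran by blast
  show "w \<unrhd>\<^sub>v u \<and> u \<unrhd>\<^sub>v w" if "u \<in> ran P" for u
    using chb[OF assms(2) that] chb[OF that assms(2)] assms(3-6)
    by (blast intro: view_chb_mono_left view_chb_mono_right)
  show "w \<unrhd>\<^sub>v w"
    using chb[OF assms(2) assms(2)] assms(3-6)
    by (blast intro: view_chb_mono_left view_chb_mono_right)
qed

lemma well_ordered_wait:
  assumes "well_ordered P" and "P t = Some v" and "Sync P t"
  shows "well_ordered (P(t \<mapsto> v\<lparr>wp := Suc (wp v)\<rparr>))" (is "well_ordered (P(t \<mapsto> ?w))")
proof (rule well_ordered_fun_upd[OF assms(1)])
  have v: "v \<in> ran P"
    using assms(2) by (simp add: ranI)
  have passed: "u \<unrhd>\<^sub>v ?w" if "u \<in> ran P" for u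
    using that assms(2,3) by (intro view_chbI) (auto simp: Sync_def ran_def Suc_le_eq)
  have chb: "\<And>u. u \<in> ran P \<Longrightarrow> v \<unrhd>\<^sub>v u"
    using assms(1) v unfolding well_ordered_iff_ran by blast
  show "?w \<unrhd>\<^sub>v u \<and> u \<unrhd>\<^sub>v ?w" if "u \<in> ran P" for u
    using chb[OF that] passed[OF that]
    by (auto intro: view_chb_mono_left simp: CanSignal_def)
  show "?w \<unrhd>\<^sub>v ?w"
    using passed[OF v] by (auto intro: view_chb_mono_left simp: CanSignal_def)
qed

lemma reduce_well_ordered:
  assumes "reduce P t o' Q" and "well_ordered P"
  shows "well_ordered Q"
  using assms
proof cases
  case (signal v)
  then show ?thesis
    using assms(2) by (auto intro: well_ordered_fun_upd_weaker ranI simp: CanSignal_def CanWait_def)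
next
  case (wait v)
  then show ?thesis
    using assms(2) by (simp add: well_ordered_wait)
next
  case (register t' v r)
  then show ?thesis
    using assms(2) by (auto intro: well_ordered_fun_upd_weaker ranI simp: CanSignal_def CanWait_def)
next
  case drop
  then show ?thesis
    using assms(2) by (auto intro: well_ordered_map_le simp: map_le_def)
qed

theorem lemma2:
  fixes P Q :: "'t phaser"
  assumes "finite (dom P)"
    and "well_ordered P"
    and "reduces P Q"
  shows "well_ordered Q"
  using assms(3) reduce_well_ordered[OF _ assms(2)] unfolding reduces_def by blast

end
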